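(* Let $\mathcal{B}$ be a unital complex algebra, $n_0\in\mathbb{N}$, $\mathcal{A}=\mathrm{Mat}_{n_0}(\mathcal{B})$ and let $(\Omega,\mathrm{d},\bar{\mathrm{d}})$ be a bidifferential graded algebra with $\Omega=\mathcal{A}\otimes\bigwedge(\mathbb{C}^2)$, where $\mathrm{d},\bar{\mathrm{d}}$ respect matrix sizes. Fix $n,n',m,m'\ge n_0$. Let $\mathbf{X}\in\mathrm{Mat}(n,n,\mathcal{B})$ and $\mathbf{Y}\in\mathrm{Mat}(n',n,\mathcal{B})$ satisfy $$\bar{\mathrm{d}}\mathbf{X}=(\mathrm{d}\mathbf{X})\,\mathbf{P},\qquad \bar{\mathrm{d}}\mathbf{Y}=(\mathrm{d}\mathbf{Y})\,\mathbf{P},\qquad \mathbf{R}\mathbf{X}-\mathbf{X}\mathbf{P}=-\mathbf{Q}\mathbf{Y},$$ where $\mathbf{P},\mathbf{R}\in\mathrm{Mat}(n,n,\mathcal{B})$ are $\mathrm{d}$- and $\bar{\mathrm{d}}$-constant and $\mathbf{Q}=\tilde{\mathbf{V}}\,Q\,\tilde{\mathbf{U}}$ with $\mathrm{d}$- and $\bar{\mathrm{d}}$-constant matrices $\tilde{\mathbf{U}}\in\mathrm{Mat}(m',n',\mathcal{B})$, $\tilde{\mathbf{V}}\in\mathrm{Mat}(n,m,\mathcal{B})$, $Q\in\mathrm{Mat}(m,m',\mathcal{B})$. If $\mathbf{X}$ is invertible, then $\phi:=\tilde{\mathbf{U}}\mathbf{Y}\mathbf{X}^{-1}\tilde{\mathbf{V}}\in\mathrm{Mat}(m',m,\mathcal{B})$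 satisfies $$\bar{\mathrm{d}}\phi=(\mathrm{d}\phi)\,Q\,\phi+\mathrm{d}\theta\qquad\text{with}\qquad \theta=\tilde{\mathbf{U}}\mathbf{Y}\mathbf{X}^{-1}\mathbf{R}\tilde{\mathbf{V}},$$ and consequently $\bar{\mathrm{d}}\mathrm{d}\phi=\mathrm{d}\phi\,Q\,\mathrm{d}\phi$.
   Context: A complex graded algebra is an associative algebra $\Omega=\bigoplus_{r\ge0}\Omega^r$ (direct sum of complex vector spaces) with $\Omega^r\Omega^s\subseteq\Omega^{r+s}$; $\Omega^0$ is a subalgebra and each $\Omega^r$ an $\Omega^0$-bimodule. A bidifferential graded algebra is a graded algebra with two linear maps $\mathrm{d},\bar{\mathrm{d}}:\Omega\to\Omega$ of degree one satisfying $\mathrm{d}^2=0$, $\bar{\mathrm{d}}^2=0$, $\mathrm{d}\bar{\mathrm{d}}+\bar{\mathrm{d}}\mathrm{d}=0$ and the graded Leibniz rule $\mathrm{d}(\chi\chi')=(\mathrm{d}\chi)\chi'+(-1)^r\chi\,\mathrm{d}\chi'$ (same for $\bar{\mathrm{d}}$) for $\chi\in\Omega^r$. $\mathrm{Mat}_{n_0}(\mathcal{B}):=\bigoplus_{n',n\ge n_0}\mathrm{Mat}(n',n,\mathcal{B})$ with the usual matrix product, extended by $AB=0$ whenever sizes do not match. $\Omega=\mathcal{A}\otimes\bigwedge(\mathbb{C}^2)$, elements of $\bigwedge(\mathbb{C}^2)$ are treated as constants; "$\mathrm{d},\bar{\mathrm{d}}$ respect matrix sizes" means they map $\mathrm{Mat}(n',n,\mathcal{B})\otimes\bigwedge(\mathbb{C}^2)$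 into itself. An element is $\mathrm{d}$- and $\bar{\mathrm{d}}$-constant if it is annihilated by both $\mathrm{d}$ and $\bar{\mathrm{d}}$. *)

theory Defs
  imports Complex_Main
begin

text \<open>Matrices over B are modelled as entry functions; an element of
  Omega = Mat_n0(B) (x) Lambda(C^2) is modelled as a function assigning to each
  block size (r,c) and each wedge monomial S (a subset of {0,1}, standing for
  xi_S in Lambda(C^2)) an r x c matrix (entries outside the block are 0).\<close>

type_synonym 'b mat = "nat \<Rightarrow> nat \<Rightarrow> 'b"
type_synonym 'b om = "nat \<Rightarrow> nat \<Rightarrow> nat set \<Rightarrow> 'b mat"

definition complex_algebra :: "(complex \<Rightarrow> 'b::ring_1 \<Rightarrow> 'b) \<Rightarrow> bool" where
  "complex_algebra sc \<longleftrightarrow>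
     (\<forall>a b x. sc (a + b) x = sc a x + sc b x) \<and>
     (\<forall>a x y. sc a (x + y) = sc a x + sc a y) \<and>
     (\<forall>a b x. sc (a * b) x = sc a (sc b x)) \<and>
     (\<forall>x. sc 1 x = x) \<and>
     (\<forall>a x y. sc a (x * y) = sc a x * y) \<and>
     (\<forall>a x y. sc a (x * y) = x * sc a y)"

definition mzero :: "'b::zero mat" where
  "mzero = (\<lambda>i j. 0)"

definition om_zero :: "'b::zero om" where
  "om_zero = (\<lambda>r c S. mzero)"

definition om_wf :: "nat \<Rightarrow> 'b::zero om \<Rightarrow> bool" where
  "om_wf n0 w \<longleftrightarrow>
     finite {(r, c, S). w r c S \<noteq> mzero} \<and>
     (\<forall>r c S. w r c S \<noteq> mzero \<longrightarrow> n0 \<le> r \<and> n0 \<le> c \<and> S \<subseteq> {0, 1}) \<and>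
     (\<forall>r c S i j. r \<le> i \<or> c \<le> j \<longrightarrow> w r c S i j = 0)"

text \<open>Sign of xi_T xi_U = wsign T U * xi_(T union U) for disjoint T, U.\<close>
definition wsign :: "nat set \<Rightarrow> nat set \<Rightarrow> 'b::ring_1" where
  "wsign T U = (-1) ^ card {(t, u). t \<in> T \<and> u \<in> U \<and> u < t}"

definition om_add :: "'b::ring_1 om \<Rightarrow> 'b om \<Rightarrow> 'b om" where
  "om_add w v = (\<lambda>r c S i j. w r c S i j + v r c S i j)"

definition om_diff :: "'b::ring_1 om \<Rightarrow> 'b om \<Rightarrow> 'b om" where
  "om_diff w v = (\<lambda>r c S i j. w r c S i j - v r c S i j)"

definition om_uminus :: "'b::ring_1 om \<Rightarrow> 'b om" where
  "om_uminus w = (\<lambda>r c S i j. - w r c S i j)"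

definition om_scale :: "(complex \<Rightarrow> 'b::ring_1 \<Rightarrow> 'b) \<Rightarrow> complex \<Rightarrow> 'b om \<Rightarrow> 'b om" where
  "om_scale sc z w = (\<lambda>r c S i j. sc z (w r c S i j))"

text \<open>Product in Omega: block matrix product (zero for mismatching sizes)
  combined with the wedge product.\<close>
definition om_mult :: "'b::ring_1 om \<Rightarrow> 'b om \<Rightarrow> 'b om" where
  "om_mult w v = (\<lambda>r c S i j.
     \<Sum>k\<in>{k. \<exists>T. w r k T \<noteq> mzero}. \<Sum>T\<in>Pow S.
        wsign T (S - T) * (\<Sum>l<k. w r k T i l * v k c (S - T) l j))"

text \<open>Right multiplication by the constant wedge monomial xi_R.\<close>
definition om_rwedge :: "'b::ring_1 om \<Rightarrow> nat set \<Rightarrow> 'b om" where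
  "om_rwedge w R = (\<lambda>r c S. if R \<subseteq> S
       then (\<lambda>i j. wsign (S - R) R * w r c (S - R) i j) else mzero)"

definition om_hom :: "nat \<Rightarrow> 'b::zero om \<Rightarrow> bool" where
  "om_hom k w \<longleftrightarrow> (\<forall>r c S. w r c S \<noteq> mzero \<longrightarrow> card S = k)"

definition in_block :: "nat \<Rightarrow> nat \<Rightarrow> 'b::zero om \<Rightarrow> bool" where
  "in_block a b w \<longleftrightarrow> (\<forall>r c S. w r c S \<noteq> mzero \<longrightarrow> r = a \<and> c = b)"

definition blk :: "nat \<Rightarrow> nat \<Rightarrow> 'b::zero mat \<Rightarrow> 'b om" where
  "blk a b M = (\<lambda>r c S. if r = a \<and> c = b \<and> S = {}
       then (\<lambda>i j. if i < a \<and> j < b then M i j else 0) else mzero)"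

definition idm :: "'b::ring_1 mat" where
  "idm = (\<lambda>i j. if i = j then 1 else 0)"

text \<open>A degree-one, C-linear map d on Omega with d^2 = 0, the graded Leibniz
  rule, and elements of Lambda(C^2) treated as constants.\<close>
definition graded_differential ::
  "(complex \<Rightarrow> 'b::ring_1 \<Rightarrow> 'b) \<Rightarrow> nat \<Rightarrow> ('b om \<Rightarrow> 'b om) \<Rightarrow> bool" where
  "graded_differential sc n0 d \<longleftrightarrow>
     (\<forall>w. om_wf n0 w \<longrightarrow> om_wf n0 (d w)) \<and>
     (\<forall>w v. om_wf n0 w \<longrightarrow> om_wf n0 v \<longrightarrow> d (om_add w v) = om_add (d w) (d v)) \<and>
     (\<forall>z w. om_wf n0 w \<longrightarrow> d (om_scale sc z w) = om_scale sc z (d w)) \<and>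
     (\<forall>k w. om_wf n0 w \<longrightarrow> om_hom k w \<longrightarrow> om_hom (Suc k) (d w)) \<and>
     (\<forall>w. om_wf n0 w \<longrightarrow> d (d w) = om_zero) \<and>
     (\<forall>k w v. om_wf n0 w \<longrightarrow> om_wf n0 v \<longrightarrow> om_hom k w \<longrightarrow>
        d (om_mult w v) = om_add (om_mult (d w) v) (om_scale sc ((-1) ^ k) (om_mult w (d v)))) \<and>
     (\<forall>w R. om_wf n0 w \<longrightarrow> R \<subseteq> {0, 1} \<longrightarrow> d (om_rwedge w R) = om_rwedge (d w) R)"

definition bidifferential ::
  "(complex \<Rightarrow> 'b::ring_1 \<Rightarrow> 'b) \<Rightarrow> nat \<Rightarrow> ('b om \<Rightarrow> 'b om) \<Rightarrow> ('b om \<Rightarrow> 'b om) \<Rightarrow> bool" where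
  "bidifferential sc n0 d db \<longleftrightarrow>
     graded_differential sc n0 d \<and> graded_differential sc n0 db \<and>
     (\<forall>w. om_wf n0 w \<longrightarrow> om_add (d (db w)) (db (d w)) = om_zero)"

definition respects_sizes :: "nat \<Rightarrow> ('b::zero om \<Rightarrow> 'b om) \<Rightarrow> bool" where
  "respects_sizes n0 d \<longleftrightarrow>
     (\<forall>w a b. om_wf n0 w \<longrightarrow> in_block a b w \<longrightarrow> in_block a b (d w))"

end

theory Submission
  imports Defs
begin

(* The theorem then follows the paper's computation in two steps:
   (1) if db X = (dX) P and db Y = (dY) P with X invertible, the quotient
       psi = Y X^-1 satisfies db psi = (d psi) (X P X^-1), and the relation
       R X - X P = -V Q U Y turns X P X^-1 into R + V Q U psi;
   (2) sandwiching between the constants U and V gives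
       db phi = (d phi) Q phi + d theta, and applying d to this equation,
       together with d db = - db d, gives db d phi = (d phi) Q (d phi). *)

section \<open>Flattened components and the product formula\<close>

definition om_bounded :: "nat \<Rightarrow> 'b::ring_1 om \<Rightarrow> bool" where
  "om_bounded N w \<longleftrightarrow> (\<forall>r c S. w r c S \<noteq> mzero \<longrightarrow> r < N \<and> c < N) \<and>
     (\<forall>r c S i j. r \<le> i \<or> c \<le> j \<longrightarrow> w r c S i j = 0)"

definition pair_mult ::
  "(nat \<times> nat) set \<Rightarrow> (nat \<times> nat \<Rightarrow> nat \<times> nat \<Rightarrow> 'b::ring_1) \<Rightarrow>
   (nat \<times> nat \<Rightarrow> nat \<times> nat \<Rightarrow> 'b) \<Rightarrow> nat \<times> nat \<Rightarrow> nat \<times> nat \<Rightarrow> 'b" where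
  "pair_mult I a b x y = (\<Sum>p\<in>I. a x p * b p y)"

text \<open>The component of w at the wedge monomial T, all blocks flattened into
  one matrix.\<close>
definition om_flat :: "'b om \<Rightarrow> nat set \<Rightarrow> nat \<times> nat \<Rightarrow> nat \<times> nat \<Rightarrow> 'b" where
  "om_flat w T = (\<lambda>(r, i) (k, l). w r k T i l)"

abbreviation box :: "nat \<Rightarrow> (nat \<times> nat) set" where
  "box N \<equiv> {..<N} \<times> {..<N}"

lemma om_bounded_mono: "om_bounded N w \<Longrightarrow> N \<le> M \<Longrightarrow> om_bounded M w"
  unfolding om_bounded_def by (meson less_le_trans)

lemma om_mult_flat:
  assumes w: "om_bounded N w"
  shows "om_mult w v r c S i j =
    (\<Sum>T\<in>Pow S. wsign T (S - T) * pair_mult (box N) (om_flat w T) (om_flat v (S - T)) (r, i) (c, j))"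
proof -
  let ?f = "\<lambda>k. \<Sum>T\<in>Pow S. wsign T (S - T) * (\<Sum>l<k. w r k T i l * v k c (S - T) l j)"
  have blocks: "{k. \<exists>T. w r k T \<noteq> mzero} \<subseteq> {..<N}"
    using w unfolding om_bounded_def by auto
  have "om_mult w v r c S i j = (\<Sum>k<N. ?f k)"
    unfolding om_mult_def
    by (rule sum.mono_neutral_left) (use blocks in \<open>auto simp: mzero_def\<close>)
  also have "\<dots> = (\<Sum>k<N. \<Sum>T\<in>Pow S. wsign T (S - T) * (\<Sum>l<N. w r k T i l * v k c (S - T) l j))"
  proof -
    have "(\<Sum>l<k. w r k T i l * v k c (S - T) l j) = (\<Sum>l<N. w r k T i l * v k c (S - T) l j)"
      if "k < N" for k T
      by (rule sum.mono_neutral_left) (use that w in \<open>auto simp: om_bounded_def\<close>)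
    then show ?thesis by simp
  qed
  also have "\<dots> = (\<Sum>T\<in>Pow S. \<Sum>k<N. wsign T (S - T) * (\<Sum>l<N. w r k T i l * v k c (S - T) l j))"
    by (rule sum.swap)
  also have "\<dots> = (\<Sum>T\<in>Pow S. wsign T (S - T) * (\<Sum>k<N. \<Sum>l<N. w r k T i l * v k c (S - T) l j))"
    by (simp add: sum_distrib_left)
  also have "\<dots> = (\<Sum>T\<in>Pow S. wsign T (S - T) * pair_mult (box N) (om_flat w T) (om_flat v (S - T)) (r, i) (c, j))"
    by (simp add: pair_mult_def om_flat_def sum.cartesian_product case_prod_beta)
  finally show ?thesis .
qed

lemma pair_mult_assoc: "pair_mult I (pair_mult I a b) c x y = pair_mult I a (pair_mult I b c) x y"
proof -
  have "pair_mult I (pair_mult I a b) c x y = (\<Sum>p\<in>I. \<Sum>q\<in>I. a x q * b q p * c p y)"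
    unfolding pair_mult_def sum_distrib_right by simp
  also have "\<dots> = (\<Sum>q\<in>I. \<Sum>p\<in>I. a x q * b q p * c p y)" by (rule sum.swap)
  also have "\<dots> = pair_mult I a (pair_mult I b c) x y"
    unfolding pair_mult_def sum_distrib_left by (simp add: mult.assoc)
  finally show ?thesis .
qed

text \<open>Wedge signs are powers of -1, hence central in the (noncommutative)
  coefficient ring.\<close>
lemma wsign_central: "wsign T U * (x::'b::ring_1) = x * wsign T U"
proof -
  have "(-1::'b) ^ k * x = x * (-1) ^ k" for k
    by (induction k) (simp_all add: mult.assoc)
  then show ?thesis unfolding wsign_def by blast
qed

lemma pair_mult_sum_left:
  "pair_mult I (\<lambda>x p. \<Sum>t\<in>A. f t * g t x p) b x y = (\<Sum>t\<in>A. f t * pair_mult I (g t) b x y)"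
proof -
  have "pair_mult I (\<lambda>x p. \<Sum>t\<in>A. f t * g t x p) b x y = (\<Sum>p\<in>I. \<Sum>t\<in>A. f t * (g t x p * b p y))"
    unfolding pair_mult_def sum_distrib_right by (simp add: mult.assoc)
  also have "\<dots> = (\<Sum>t\<in>A. f t * pair_mult I (g t) b x y)"
    by (subst sum.swap) (simp add: pair_mult_def sum_distrib_left)
  finally show ?thesis .
qed

lemma pair_mult_sum_right:
  "pair_mult I a (\<lambda>p y. \<Sum>t\<in>A. wsign (F t) (G t) * g t p y) x y =
   (\<Sum>t\<in>A. wsign (F t) (G t) * pair_mult I a (g t) x y)"
proof -
  have "a x p * (wsign (F t) (G t) * g t p y) = wsign (F t) (G t) * (a x p * g t p y)" for p t
    by (metis mult.assoc wsign_central)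
  then show ?thesis
    unfolding pair_mult_def sum_distrib_left by (simp only:) (rule sum.swap)
qed

lemma om_mult_nonzero:
  assumes w: "om_bounded N w" and nz: "om_mult w v r c S i j \<noteq> 0"
  obtains T k l where "finite S" "T \<subseteq> S" "w r k T i l \<noteq> 0" "v k c (S - T) l j \<noteq> 0"
proof -
  have fin: "finite S"
  proof (rule ccontr)
    assume "infinite S"
    then show False using nz unfolding om_mult_flat[OF w] by simp
  qed
  obtain T where T: "T \<in> Pow S"
    "wsign T (S - T) * pair_mult (box N) (om_flat w T) (om_flat v (S - T)) (r, i) (c, j) \<noteq> 0"
    using nz unfolding om_mult_flat[OF w] by (meson sum.not_neutral_contains_not_neutral)
  then have "pair_mult (box N) (om_flat w T) (om_flat v (S - T)) (r, i) (c, j) \<noteq> 0" by auto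
  then obtain p where p: "om_flat w T (r, i) p * om_flat v (S - T) p (c, j) \<noteq> 0"
    unfolding pair_mult_def by (meson sum.not_neutral_contains_not_neutral)
  obtain k l where "p = (k, l)" by fastforce
  with p have "w r k T i l \<noteq> 0" "v k c (S - T) l j \<noteq> 0" by (auto simp: om_flat_def)
  with fin T(1) show ?thesis by (intro that) auto
qed

lemma om_mult_block_nonzero:
  assumes w: "om_bounded N w" and nz: "om_mult w v r c S \<noteq> mzero"
  obtains T k where "finite S" "T \<subseteq> S" "w r k T \<noteq> mzero" "v k c (S - T) \<noteq> mzero"
proof -
  obtain i j where "om_mult w v r c S i j \<noteq> 0" using nz unfolding mzero_def by meson
  then obtain T k l where "finite S" "T \<subseteq> S" "w r k T i l \<noteq> 0" "v k c (S - T) l j \<noteq> 0"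
    by (rule om_mult_nonzero[OF w])
  then show ?thesis by (intro that[of T k]) (auto simp: mzero_def fun_eq_iff)
qed

lemma om_bounded_mult:
  assumes w: "om_bounded N w" and v: "om_bounded N v"
  shows "om_bounded N (om_mult w v)"
proof -
  have w_rows: "\<And>r c S. w r c S \<noteq> mzero \<Longrightarrow> r < N" and w_out: "\<And>r c S i j. r \<le> i \<Longrightarrow> w r c S i j = 0"
    using w unfolding om_bounded_def by auto
  have v_cols: "\<And>r c S. v r c S \<noteq> mzero \<Longrightarrow> c < N" and v_out: "\<And>r c S i j. c \<le> j \<Longrightarrow> v r c S i j = 0"
    using v unfolding om_bounded_def by auto
  have "r < N \<and> c < N" if "om_mult w v r c S \<noteq> mzero" for r c S
    using om_mult_block_nonzero[OF w that] w_rows v_cols by metis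
  moreover have "om_mult w v r c S i j = 0" if out: "r \<le> i \<or> c \<le> j" for r c S i j
  proof (rule ccontr)
    assume "om_mult w v r c S i j \<noteq> 0"
    then obtain T k l where "w r k T i l \<noteq> 0" "v k c (S - T) l j \<noteq> 0"
      by (rule om_mult_nonzero[OF w])
    then show False using out w_out v_out by blast
  qed
  ultimately show ?thesis unfolding om_bounded_def by blast
qed

definition inversions :: "nat set \<Rightarrow> nat set \<Rightarrow> nat" where
  "inversions T U = card {(t, u). t \<in> T \<and> u \<in> U \<and> u < t}"

lemma finite_inversion_pairs:
  "finite A \<Longrightarrow> finite B \<Longrightarrow> finite {(t, u). t \<in> A \<and> u \<in> B \<and> (u::nat) < t}"
  by (rule finite_subset[of _ "A \<times> B"]) auto

lemma inversions_Un_left: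
  assumes "finite T" "finite T'" "finite U" "T \<inter> T' = {}"
  shows "inversions (T \<union> T') U = inversions T U + inversions T' U"
proof -
  have split: "{(t, u). t \<in> T \<union> T' \<and> u \<in> U \<and> u < t} =
        {(t, u). t \<in> T \<and> u \<in> U \<and> u < t} \<union> {(t, u). t \<in> T' \<and> u \<in> U \<and> u < t}" by auto
  show ?thesis
    unfolding inversions_def split
    by (rule card_Un_disjoint) (use finite_inversion_pairs assms in auto)
qed

lemma inversions_Un_right:
  assumes "finite T" "finite U" "finite U'" "U \<inter> U' = {}"
  shows "inversions T (U \<union> U') = inversions T U + inversions T U'"
proof -
  have split: "{(t, u). t \<in> T \<and> u \<in> U \<union> U' \<and> u < t} =
        {(t, u). t \<in> T \<and> u \<in> U \<and> u < t} \<union> {(t, u). t \<in> T \<and> u \<in> U' \<and> u < t}" by auto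
  show ?thesis
    unfolding inversions_def split
    by (rule card_Un_disjoint) (use finite_inversion_pairs assms in auto)
qed

text \<open>The cocycle identity of the wedge signs: the two ways of splitting S
  into three consecutive factors A, B, S - A - B carry the same sign.  This
  is associativity of the exterior algebra.\<close>
lemma wsign_cocycle:
  assumes S: "finite S" and A: "A \<subseteq> S" and B: "B \<subseteq> S - A"
  shows "wsign (A \<union> B) (S - A - B) * wsign A B = wsign A (S - A) * (wsign B (S - A - B) :: 'b::ring_1)"
proof -
  have fin: "finite A" "finite B" "finite (S - A - B)"
    using finite_subset[OF A S] finite_subset[OF B] S by auto
  have "S - A = B \<union> (S - A - B)" using B by auto
  then have "inversions A (S - A) = inversions A B + inversions A (S - A - B)"
    using inversions_Un_right[OF fin] B by auto
  moreover have "inversions (A \<union> B) (S - A - B) = inversions A (S - A - B) + inversions B (S - A - B)"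
    using inversions_Un_left[OF fin(1,2,3)] B by auto
  ultimately show ?thesis
    unfolding wsign_def inversions_def[symmetric] power_add[symmetric] by (simp add: ac_simps)
qed

text \<open>Reindexing a double sum over nested subsets T' \<subseteq> T \<subseteq> S by the
  disjoint pieces A = T' and B = T - T'.\<close>
lemma sum_Pow_nested:
  assumes "finite S"
  shows "(\<Sum>T\<in>Pow S. \<Sum>T'\<in>Pow T. g T T') = (\<Sum>A\<in>Pow S. \<Sum>B\<in>Pow (S - A). (g (A \<union> B) A :: 'b::comm_monoid_add))"
proof -
  have "(\<Sum>T\<in>Pow S. \<Sum>T'\<in>Pow T. g T T') = (\<Sum>(T, T')\<in>(SIGMA T:Pow S. Pow T). g T T')"
    by (rule sum.Sigma) (auto intro: finite_subset[OF _ assms])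
  also have "\<dots> = (\<Sum>(A, B)\<in>(SIGMA A:Pow S. Pow (S - A)). g (A \<union> B) A)"
    by (rule sum.reindex_bij_witness[where i = "\<lambda>(A, B). (A \<union> B, A)" and j = "\<lambda>(T, T'). (T', T - T')"])
       (auto simp: Un_absorb1)
  also have "\<dots> = (\<Sum>A\<in>Pow S. \<Sum>B\<in>Pow (S - A). g (A \<union> B) A)"
    by (rule sum.Sigma[symmetric]) (use assms in auto)
  finally show ?thesis .
qed

section \<open>Associativity\<close>

lemma om_flat_mult:
  assumes "om_bounded N w"
  shows "om_flat (om_mult w v) T =
    (\<lambda>x p. \<Sum>T'\<in>Pow T. wsign T' (T - T') * pair_mult (box N) (om_flat w T') (om_flat v (T - T')) x p)"
  by (intro ext) (auto simp: om_flat_def om_mult_flat[OF assms] split: prod.split)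

text \<open>Associativity: expand both sides into a double sum over the splittings
  S = A u B u (S - A - B) and compare signs with the cocycle identity.\<close>
lemma om_mult_assoc_bounded:
  fixes w v u :: "'b::ring_1 om"
  assumes w: "om_bounded N w" and v: "om_bounded N v"
  shows "om_mult (om_mult w v) u = om_mult w (om_mult v u)"
proof (intro ext)
  fix r c S i j
  have wv: "om_bounded N (om_mult w v)" by (rule om_bounded_mult[OF w v])
  show "om_mult (om_mult w v) u r c S i j = om_mult w (om_mult v u) r c S i j"
  proof (cases "finite S")
    case False
    then show ?thesis unfolding om_mult_flat[OF wv] om_mult_flat[OF w] by simp
  next
    case True
    let ?F = "\<lambda>A B C. pair_mult (box N) (om_flat w A) (pair_mult (box N) (om_flat v B) (om_flat u C)) (r, i) (c, j)"
    have "om_mult (om_mult w v) u r c S i j =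
       (\<Sum>T\<in>Pow S. wsign T (S - T) * (\<Sum>T'\<in>Pow T. wsign T' (T - T') *
            pair_mult (box N) (pair_mult (box N) (om_flat w T') (om_flat v (T - T'))) (om_flat u (S - T)) (r, i) (c, j)))"
      unfolding om_mult_flat[OF wv] om_flat_mult[OF w] pair_mult_sum_left ..
    also have "\<dots> = (\<Sum>T\<in>Pow S. \<Sum>T'\<in>Pow T. wsign T (S - T) * wsign T' (T - T') * ?F T' (T - T') (S - T))"
      by (simp add: sum_distrib_left mult.assoc pair_mult_assoc)
    also have "\<dots> = (\<Sum>A\<in>Pow S. \<Sum>B\<in>Pow (S - A).
        wsign (A \<union> B) (S - (A \<union> B)) * wsign A (A \<union> B - A) * ?F A (A \<union> B - A) (S - (A \<union> B)))"
      by (rule sum_Pow_nested[OF True])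
    also have "\<dots> = (\<Sum>A\<in>Pow S. \<Sum>B\<in>Pow (S - A). wsign A (S - A) * wsign B (S - A - B) * ?F A B (S - A - B))"
    proof (intro sum.cong refl)
      fix A B assume A: "A \<in> Pow S" and B: "B \<in> Pow (S - A)"
      then have e: "A \<union> B - A = B" "S - (A \<union> B) = S - A - B" by auto
      have cocycle: "wsign (A \<union> B) (S - A - B) * wsign A B = wsign A (S - A) * (wsign B (S - A - B) :: 'b)"
        using wsign_cocycle[OF True] A B by auto
      show "wsign (A \<union> B) (S - (A \<union> B)) * wsign A (A \<union> B - A) * ?F A (A \<union> B - A) (S - (A \<union> B)) =
            wsign A (S - A) * wsign B (S - A - B) * ?F A B (S - A - B)" unfolding e cocycle ..
    qed
    also have "\<dots> = om_mult w (om_mult v u) r c S i j"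
      unfolding om_mult_flat[OF w] om_flat_mult[OF v] pair_mult_sum_right
      by (simp add: sum_distrib_left mult.assoc)
    finally show ?thesis .
  qed
qed

lemma om_wf_bounded:
  assumes "om_wf n0 w" obtains N where "om_bounded N w"
proof -
  let ?F = "{(r, c, S). w r c S \<noteq> mzero}"
  let ?M = "fst ` ?F \<union> (fst \<circ> snd) ` ?F"
  have fin: "finite ?M" using assms unfolding om_wf_def by blast
  have "r < Suc (Max ?M) \<and> c < Suc (Max ?M)" if "w r c S \<noteq> mzero" for r c S
  proof -
    have "r \<in> ?M" "c \<in> ?M" using that by force+
    then show ?thesis using fin by (simp add: le_imp_less_Suc)
  qed
  then have "om_bounded (Suc (Max ?M)) w"
    using assms unfolding om_bounded_def om_wf_def by blast
  then show ?thesis by (rule that)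
qed

lemma om_wf_bounded2:
  assumes "om_wf n0 w" "om_wf n0 v" obtains N where "om_bounded N w" "om_bounded N v"
proof -
  obtain N1 N2 where "om_bounded N1 w" "om_bounded N2 v"
    using om_wf_bounded assms by metis
  then show ?thesis
    using that om_bounded_mono[of N1 w "max N1 N2"] om_bounded_mono[of N2 v "max N1 N2"] by auto
qed

lemma om_assoc:
  assumes "om_wf n0 a" "om_wf n0 b"
  shows "om_mult (om_mult a b) c = om_mult a (om_mult b c)"
  by (rule om_wf_bounded2[OF assms]) (rule om_mult_assoc_bounded)

lemma wf_mult:
  assumes w: "om_wf n0 w" and v: "om_wf n0 v" shows "om_wf n0 (om_mult w v)"
proof -
  obtain N where bw: "om_bounded N w" and bv: "om_bounded N v" using om_wf_bounded2[OF w v] .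
  have b: "om_bounded N (om_mult w v)" by (rule om_bounded_mult[OF bw bv])
  have support: "n0 \<le> r \<and> n0 \<le> c \<and> S \<subseteq> {0, 1} \<and> r < N \<and> c < N"
    if nz: "om_mult w v r c S \<noteq> mzero" for r c S
  proof -
    obtain T k where T: "T \<subseteq> S" "w r k T \<noteq> mzero" "v k c (S - T) \<noteq> mzero"
      using om_mult_block_nonzero[OF bw nz] by metis
    then have "n0 \<le> r" "T \<subseteq> {0, 1}" "n0 \<le> c" "S - T \<subseteq> {0, 1}"
      using w v unfolding om_wf_def by blast+
    moreover have "r < N \<and> c < N" using b nz unfolding om_bounded_def by blast
    ultimately show ?thesis using T by blast
  qed
  then have "{(r, c, S). om_mult w v r c S \<noteq> mzero} \<subseteq> {..<N} \<times> {..<N} \<times> Pow {0, 1}"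
    by auto
  then have "finite {(r, c, S). om_mult w v r c S \<noteq> mzero}"
    by (rule finite_subset) auto
  moreover have "om_mult w v r c S i j = 0" if "r \<le> i \<or> c \<le> j" for r c S i j
    using b that unfolding om_bounded_def by blast
  ultimately show ?thesis using support unfolding om_wf_def by blast
qed

lemma wf_blk: "n0 \<le> a \<Longrightarrow> n0 \<le> b \<Longrightarrow> om_wf n0 (blk a b M)"
proof -
  assume "n0 \<le> a" "n0 \<le> b"
  moreover have "{(r, c, S). blk a b M r c S \<noteq> mzero} \<subseteq> {(a, b, {})}" unfolding blk_def by auto
  then have "finite {(r, c, S). blk a b M r c S \<noteq> mzero}" by (rule finite_subset) auto
  ultimately show ?thesis unfolding om_wf_def by (auto simp: blk_def mzero_def)
qed

lemma wf_add:
  assumes w: "om_wf n0 w" and v: "om_wf n0 v" shows "om_wf n0 (om_add w v)"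
proof -
  have nz: "w r c S \<noteq> mzero \<or> v r c S \<noteq> mzero" if "om_add w v r c S \<noteq> mzero" for r c S
    using that by (auto simp: om_add_def mzero_def)
  then have "{(r, c, S). om_add w v r c S \<noteq> mzero} \<subseteq>
      {(r, c, S). w r c S \<noteq> mzero} \<union> {(r, c, S). v r c S \<noteq> mzero}" by blast
  then have "finite {(r, c, S). om_add w v r c S \<noteq> mzero}"
    by (rule finite_subset) (use w v in \<open>auto simp: om_wf_def\<close>)
  moreover have "n0 \<le> r \<and> n0 \<le> c \<and> S \<subseteq> {0, 1}" if "om_add w v r c S \<noteq> mzero" for r c S
    using nz[OF that] w v unfolding om_wf_def by blast
  moreover have "om_add w v r c S i j = 0" if "r \<le> i \<or> c \<le> j" for r c S i j
    using that w v unfolding om_wf_def om_add_def by auto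
  ultimately show ?thesis unfolding om_wf_def by blast
qed

lemma wf_uminus: "om_wf n0 w \<Longrightarrow> om_wf n0 (om_uminus w)"
proof -
  have "om_uminus w r c S = mzero \<longleftrightarrow> w r c S = mzero" for r c S
    by (auto simp: om_uminus_def mzero_def fun_eq_iff)
  then show "om_wf n0 w \<Longrightarrow> om_wf n0 (om_uminus w)" unfolding om_wf_def by (simp add: om_uminus_def)
qed

lemmas wf_closed = wf_mult wf_add wf_uminus

lemma om_add_comm: "om_add a b = om_add b a"
  unfolding om_add_def by (simp add: add.commute)

lemma om_add_zero_right [simp]: "om_add a om_zero = a"
  unfolding om_add_def om_zero_def mzero_def by simp

lemma om_add_zero_left [simp]: "om_add om_zero a = a"
  unfolding om_add_def om_zero_def mzero_def by simp

lemma om_uminus_uminus [simp]: "om_uminus (om_uminus a) = a"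
  unfolding om_uminus_def by simp

lemma om_uminus_zero [simp]: "om_uminus om_zero = om_zero"
  unfolding om_uminus_def om_zero_def mzero_def by simp

lemma om_mult_zero_left [simp]: "om_mult om_zero w = om_zero"
  unfolding om_mult_def om_zero_def mzero_def by simp

lemma om_mult_zero_right [simp]: "om_mult w om_zero = om_zero"
  unfolding om_mult_def om_zero_def mzero_def by simp

lemma om_add_eq_zero: "om_add a b = om_zero \<Longrightarrow> b = om_uminus a"
  unfolding om_add_def om_uminus_def om_zero_def mzero_def
  by (metis add_eq_0_iff)

lemma om_eq_add_self: "a = om_add a a \<Longrightarrow> a = om_zero"
  unfolding om_add_def om_zero_def mzero_def by (metis add_cancel_right_right)

lemma om_diff_eq_uminus: "om_diff a b = om_uminus c \<Longrightarrow> b = om_add a c"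
proof (intro ext)
  fix r k S i j
  assume "om_diff a b = om_uminus c"
  then have eq: "a r k S i j - b r k S i j = - c r k S i j"
    unfolding om_diff_def om_uminus_def by metis
  have "b r k S i j = a r k S i j - (a r k S i j - b r k S i j)" by simp
  also have "\<dots> = om_add a c r k S i j" unfolding eq om_add_def by simp
  finally show "b r k S i j = om_add a c r k S i j" .
qed

lemma om_mult_add_right: "om_mult w (om_add v u) = om_add (om_mult w v) (om_mult w u)"
  unfolding om_mult_def om_add_def by (simp add: distrib_left sum.distrib)

lemma om_mult_uminus_right: "om_mult w (om_uminus v) = om_uminus (om_mult w v)"
  unfolding om_mult_def om_uminus_def by (simp add: sum_negf)

text \<open>Left distributivity needs a common bound, since the product sums over
  the block sizes actually occurring in its left factor.\<close>
lemma om_mult_add_left: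
  assumes "om_wf n0 a" "om_wf n0 b"
  shows "om_mult (om_add a b) c = om_add (om_mult a c) (om_mult b c)"
proof -
  obtain N1 where a: "om_bounded N1 a" and b: "om_bounded N1 b" using om_wf_bounded2[OF assms] .
  obtain N2 where ab: "om_bounded N2 (om_add a b)" using om_wf_bounded[OF wf_add[OF assms]] .
  let ?N = "max N1 N2"
  have a': "om_bounded ?N a" and b': "om_bounded ?N b" and ab': "om_bounded ?N (om_add a b)"
    using om_bounded_mono[OF a] om_bounded_mono[OF b] om_bounded_mono[OF ab] by auto
  have "om_mult (om_add a b) c r c' S i j = om_mult a c r c' S i j + om_mult b c r c' S i j"
    for r c' S i j
    unfolding om_mult_flat[OF a'] om_mult_flat[OF b'] om_mult_flat[OF ab']
    by (simp add: om_add_def pair_mult_def om_flat_def case_prod_beta distrib_right distrib_left sum.distrib)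
  then show ?thesis by (intro ext) (simp add: om_add_def)
qed

lemma om_mult_uminus_left:
  assumes "om_wf n0 a"
  shows "om_mult (om_uminus a) c = om_uminus (om_mult a c)"
proof -
  obtain N where a: "om_bounded N a" and na: "om_bounded N (om_uminus a)"
    using om_wf_bounded2[OF assms wf_uminus[OF assms]] .
  have "om_mult (om_uminus a) c r c' S i j = - om_mult a c r c' S i j" for r c' S i j
    unfolding om_mult_flat[OF a] om_mult_flat[OF na]
    by (simp add: om_uminus_def pair_mult_def om_flat_def case_prod_beta sum_negf)
  then show ?thesis by (intro ext) (simp add: om_uminus_def)
qed

lemma in_block_blk: "in_block a b (blk a b M)"
  unfolding in_block_def blk_def by auto

lemma om_bounded_blk: "a < N \<Longrightarrow> b < N \<Longrightarrow> om_bounded N (blk a b M)"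
  unfolding om_bounded_def blk_def mzero_def by (auto simp: fun_eq_iff)

lemma wf_infinite_monomial: "om_wf n0 w \<Longrightarrow> infinite S \<Longrightarrow> w r c S i j = 0"
  unfolding om_wf_def mzero_def by (metis finite.emptyI finite_insert finite_subset)

lemma sum_single: "finite A \<Longrightarrow> x \<in> A \<Longrightarrow> (\<And>y. y \<in> A \<Longrightarrow> y \<noteq> x \<Longrightarrow> f y = 0) \<Longrightarrow> sum f A = f x"
  by (metis (mono_tags, lifting) sum.remove sum.neutral add.right_neutral DiffE insertCI)

lemma wsign_empty [simp]: "wsign S {} = 1" "wsign {} S = 1"
  unfolding wsign_def by simp_all

lemma om_mult_unit_right:
  assumes w: "om_wf n0 w" and ib: "in_block a n w"
  shows "om_mult w (blk n n idm) = w"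
proof (intro ext)
  fix r c S i j
  obtain N0 where "om_bounded N0 w" using om_wf_bounded[OF w] .
  then have b: "om_bounded (max N0 (Suc n)) w" by (rule om_bounded_mono) simp
  let ?N = "max N0 (Suc n)"
  show "om_mult w (blk n n idm) r c S i j = w r c S i j"
  proof (cases "finite S")
    case False
    then show ?thesis using wf_infinite_monomial[OF w] by (simp add: om_mult_flat[OF b])
  next
    case True
    have "om_mult w (blk n n idm) r c S i j =
        wsign S (S - S) * pair_mult (box ?N) (om_flat w S) (om_flat (blk n n idm) (S - S)) (r, i) (c, j)"
      unfolding om_mult_flat[OF b]
    proof (rule sum_single)
      fix T assume "T \<in> Pow S" "T \<noteq> S"
      then have "S - T \<noteq> {}" by auto
      then show "wsign T (S - T) * pair_mult (box ?N) (om_flat w T) (om_flat (blk n n idm) (S - T)) (r, i) (c, j) = 0"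
        by (simp add: pair_mult_def om_flat_def blk_def mzero_def case_prod_beta)
    qed (use True in auto)
    also have "\<dots> = (\<Sum>p\<in>box ?N. if p = (n, j) then (if c = n \<and> j < n then w r n S i j else 0) else 0)"
      unfolding pair_mult_def Diff_cancel wsign_empty mult_1_left
      by (intro sum.cong refl) (auto simp: om_flat_def blk_def idm_def mzero_def case_prod_beta)
    also have "\<dots> = (if c = n \<and> j < n then w r n S i j else 0)"
      by (simp add: less_max_iff_disj)
    also have "\<dots> = w r c S i j"
    proof -
      have "c \<noteq> n \<Longrightarrow> w r c S i j = 0" using ib unfolding in_block_def mzero_def by metis
      moreover have "n \<le> j \<Longrightarrow> w r c S i j = 0 \<or> c \<noteq> n" using w unfolding om_wf_def by blast
      ultimately show ?thesis by auto
    qed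
    finally show ?thesis .
  qed
qed

lemma om_mult_unit_left:
  assumes w: "om_wf n0 w" and ib: "in_block n b w"
  shows "om_mult (blk n n idm) w = w"
proof (intro ext)
  fix r c S i j
  let ?N = "Suc n"
  have b: "om_bounded ?N (blk n n idm)" by (rule om_bounded_blk) simp_all
  show "om_mult (blk n n idm) w r c S i j = w r c S i j"
  proof (cases "finite S")
    case False
    then show ?thesis using wf_infinite_monomial[OF w] by (simp add: om_mult_flat[OF b])
  next
    case True
    have "om_mult (blk n n idm) w r c S i j =
        wsign {} (S - {}) * pair_mult (box ?N) (om_flat (blk n n idm) {}) (om_flat w (S - {})) (r, i) (c, j)"
      unfolding om_mult_flat[OF b]
    proof (rule sum_single)
      fix T assume "T \<in> Pow S" "T \<noteq> {}"
      then show "wsign T (S - T) * pair_mult (box ?N) (om_flat (blk n n idm) T) (om_flat w (S - T)) (r, i) (c, j) = 0"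
        by (simp add: pair_mult_def om_flat_def blk_def mzero_def case_prod_beta)
    qed (use True in auto)
    also have "\<dots> = (\<Sum>p\<in>box ?N. if p = (n, i) then (if r = n \<and> i < n then w n c S i j else 0) else 0)"
      unfolding pair_mult_def Diff_empty wsign_empty mult_1_left
      by (intro sum.cong refl) (auto simp: om_flat_def blk_def idm_def mzero_def case_prod_beta)
    also have "\<dots> = (if r = n \<and> i < n then w n c S i j else 0)"
      by simp
    also have "\<dots> = w r c S i j"
    proof -
      have "r \<noteq> n \<Longrightarrow> w r c S i j = 0" using ib unfolding in_block_def mzero_def by metis
      moreover have "n \<le> i \<Longrightarrow> w r c S i j = 0 \<or> r \<noteq> n" using w unfolding om_wf_def by blast
      ultimately show ?thesis by auto
    qed
    finally show ?thesis .
  qed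
qed

lemma hom_blk: "om_hom 0 (blk a b M)"
  unfolding om_hom_def blk_def by auto

lemma hom_mult:
  assumes "om_wf n0 w" "om_hom k w" "om_hom k' v"
  shows "om_hom (k + k') (om_mult w v)"
  unfolding om_hom_def
proof (intro allI impI)
  fix r c S assume nz: "om_mult w v r c S \<noteq> mzero"
  obtain N where "om_bounded N w" using om_wf_bounded[OF assms(1)] .
  then obtain T k1 where T: "finite S" "T \<subseteq> S" "w r k1 T \<noteq> mzero" "v k1 c (S - T) \<noteq> mzero"
    using om_mult_block_nonzero[OF _ nz] by metis
  then have "card T = k" "card (S - T) = k'" using assms unfolding om_hom_def by blast+
  moreover have "card S = card T + card (S - T)"
    using T by (metis card_Diff_subset card_mono finite_subset le_add_diff_inverse)
  ultimately show "card S = k + k'" by simp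
qed

lemma hom0_mult: "om_wf n0 w \<Longrightarrow> om_hom 0 w \<Longrightarrow> om_hom 0 v \<Longrightarrow> om_hom 0 (om_mult w v)"
  using hom_mult[where k = 0 and k' = 0] by simp

section \<open>Calculus of a graded differential\<close>

lemma scale_one: "complex_algebra sc \<Longrightarrow> om_scale sc 1 w = w"
  unfolding om_scale_def complex_algebra_def by simp

lemma scale_neg1:
  assumes "complex_algebra sc" shows "om_scale sc (-1) w = om_uminus w"
proof -
  have "sc (-1) x = - x" for x
  proof -
    have "sc 0 x = 0"
      using assms[unfolded complex_algebra_def] by (metis add_cancel_right_right)
    moreover have "sc (1 + -1) x = sc 1 x + sc (-1) x" and "sc 1 x = x"
      using assms unfolding complex_algebra_def by blast+
    ultimately have "x + sc (-1) x = 0" by simp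
    then show ?thesis using minus_unique by metis
  qed
  then show ?thesis unfolding om_scale_def om_uminus_def by simp
qed

context
  fixes sc :: "complex \<Rightarrow> 'b::ring_1 \<Rightarrow> 'b" and n0 :: nat and D :: "'b om \<Rightarrow> 'b om"
  assumes alg: "complex_algebra sc" and gd: "graded_differential sc n0 D"
begin

lemma D_rules:
  "om_wf n0 w \<Longrightarrow> om_wf n0 (D w)"
  "om_wf n0 w \<Longrightarrow> om_wf n0 v \<Longrightarrow> D (om_add w v) = om_add (D w) (D v)"
  "om_wf n0 w \<Longrightarrow> om_hom k w \<Longrightarrow> om_hom (Suc k) (D w)"
  "om_wf n0 w \<Longrightarrow> D (D w) = om_zero"
  "om_wf n0 w \<Longrightarrow> om_wf n0 v \<Longrightarrow> om_hom k w \<Longrightarrow>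
     D (om_mult w v) = om_add (om_mult (D w) v) (om_scale sc ((-1) ^ k) (om_mult w (D v)))"
  using gd unfolding graded_differential_def by simp_all

lemmas D_wf = D_rules(1) and D_add = D_rules(2) and D_hom = D_rules(3) and D_D = D_rules(4)

lemma D_leibniz0:
  "om_hom 0 a \<Longrightarrow> om_wf n0 a \<Longrightarrow> om_wf n0 b \<Longrightarrow> D (om_mult a b) = om_add (om_mult (D a) b) (om_mult a (D b))"
  using D_rules(5)[of a b 0] scale_one[OF alg] by simp

lemma D_leibniz1:
  "om_hom 1 a \<Longrightarrow> om_wf n0 a \<Longrightarrow> om_wf n0 b \<Longrightarrow>
   D (om_mult a b) = om_add (om_mult (D a) b) (om_uminus (om_mult a (D b)))"
  using D_rules(5)[of a b 1] scale_neg1[OF alg] by simp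

lemma D_const_left:
  "om_hom 0 a \<Longrightarrow> om_wf n0 a \<Longrightarrow> om_wf n0 b \<Longrightarrow> D a = om_zero \<Longrightarrow> D (om_mult a b) = om_mult a (D b)"
  using D_leibniz0 by simp

lemma D_const_right:
  "om_hom 0 a \<Longrightarrow> om_wf n0 a \<Longrightarrow> om_wf n0 b \<Longrightarrow> D b = om_zero \<Longrightarrow> D (om_mult a b) = om_mult (D a) b"
  using D_leibniz0 by simp

lemma D_sandwich:
  assumes "om_wf n0 a" "om_hom 0 a" "D a = om_zero" "om_wf n0 w" "om_hom 0 w"
    and "om_wf n0 c" "D c = om_zero"
  shows "D (om_mult a (om_mult w c)) = om_mult a (om_mult (D w) c)"
proof -
  have "D (om_mult a (om_mult w c)) = om_mult a (D (om_mult w c))"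
    using assms by (intro D_const_left) (auto intro: wf_mult)
  also have "\<dots> = om_mult a (om_mult (D w) c)"
    using assms by (simp add: D_const_right)
  finally show ?thesis .
qed

text \<open>Since D respects block sizes, D 1 is again an n x n block, and the
  Leibniz rule for 1 = 1 * 1 forces D 1 = 0.\<close>
lemma D_unit:
  assumes rs: "respects_sizes n0 D" and n: "n0 \<le> n"
  shows "D (blk n n idm) = om_zero"
proof (rule om_eq_add_self)
  let ?I = "blk n n idm :: 'b om"
  have wI: "om_wf n0 ?I" using wf_blk n by blast
  have bDI: "in_block n n (D ?I)" using rs wI in_block_blk unfolding respects_sizes_def by blast
  have "D ?I = D (om_mult ?I ?I)" using om_mult_unit_right[OF wI in_block_blk] by simp
  also have "\<dots> = om_add (D ?I) (D ?I)"
    using D_leibniz0[OF hom_blk wI wI] om_mult_unit_right[OF D_wf[OF wI] bDI]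
      om_mult_unit_left[OF D_wf[OF wI] bDI] by simp
  finally show "D ?I = om_add (D ?I) (D ?I)" .
qed

lemma D_inverse:
  assumes rs: "respects_sizes n0 D" and n: "n0 \<le> n"
    and inv: "om_mult (blk n n X) (blk n n Xi) = blk n n idm"
             "om_mult (blk n n Xi) (blk n n X) = blk n n idm"
  shows "D (blk n n Xi) = om_uminus (om_mult (blk n n Xi) (om_mult (D (blk n n X)) (blk n n Xi)))"
proof (rule om_add_eq_zero)
  let ?x = "blk n n X :: 'b om" and ?xi = "blk n n Xi :: 'b om"
  have wx: "om_wf n0 ?x" and wxi: "om_wf n0 ?xi" using wf_blk n by blast+
  have bDxi: "in_block n n (D ?xi)" using rs wxi in_block_blk unfolding respects_sizes_def by blast
  have "om_zero = om_mult ?xi (D (om_mult ?x ?xi))" using D_unit[OF rs n] inv(1) by simp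
  also have "\<dots> = om_add (om_mult ?xi (om_mult (D ?x) ?xi)) (om_mult (om_mult ?xi ?x) (D ?xi))"
    by (simp add: D_leibniz0[OF hom_blk wx wxi] om_mult_add_right om_assoc[OF wxi wx])
  also have "\<dots> = om_add (om_mult ?xi (om_mult (D ?x) ?xi)) (D ?xi)"
    unfolding inv(2) om_mult_unit_left[OF D_wf[OF wxi] bDxi] ..
  finally show "om_add (om_mult ?xi (om_mult (D ?x) ?xi)) (D ?xi) = om_zero" by simp
qed

end

section \<open>The linear system for X and Y and its quotient\<close>

text \<open>Gauge covariance: if X and Y solve db Z = (dZ) P, then the quotient
  psi = Y X^-1 solves db psi = (d psi) (X P X^-1).  Both sides expand to
  (dY) P X^-1 - Y X^-1 (dX) P X^-1.\<close>
lemma quotient_equation: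
  fixes d db :: "'b::ring_1 om \<Rightarrow> 'b om"
  assumes alg: "complex_algebra sc"
    and gd: "graded_differential sc n0 d" and gdb: "graded_differential sc n0 db"
    and rs: "respects_sizes n0 d" "respects_sizes n0 db" and n: "n0 \<le> n"
    and y: "om_wf n0 y" "om_hom 0 y"
    and hX: "db (blk n n X) = om_mult (d (blk n n X)) (blk n n P)"
    and hY: "db y = om_mult (d y) (blk n n P)"
    and inv: "om_mult (blk n n X) (blk n n Xi) = blk n n idm"
             "om_mult (blk n n Xi) (blk n n X) = blk n n idm"
  shows "db (om_mult y (blk n n Xi)) =
         om_mult (d (om_mult y (blk n n Xi))) (om_mult (om_mult (blk n n X) (blk n n P)) (blk n n Xi))"
proof -
  let ?x = "blk n n X" and ?xi = "blk n n Xi" and ?p = "blk n n P"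
  have wf: "om_wf n0 ?x" "om_wf n0 ?xi" "om_wf n0 ?p" using wf_blk n by blast+
  have wfd: "om_wf n0 (d ?x)" "om_wf n0 (d y)" using D_wf[OF alg gd] wf y by blast+
  have cancel: "om_mult ?xi (om_mult ?x (om_mult ?p ?xi)) = om_mult ?p ?xi"
  proof -
    have "om_mult ?xi (om_mult ?x (om_mult ?p ?xi)) = om_mult (om_mult (om_mult ?xi ?x) ?p) ?xi"
      using wf by (simp add: om_assoc[of n0] wf_mult)
    also have "\<dots> = om_mult ?p ?xi"
      unfolding inv(2) om_mult_unit_left[OF wf(3) in_block_blk] ..
    finally show ?thesis .
  qed
  note dist = om_mult_add_left[of n0] om_mult_uminus_left[of n0] om_mult_add_right om_mult_uminus_right
  have "db (om_mult y ?xi) =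
      om_add (om_mult (d y) (om_mult ?p ?xi)) (om_uminus (om_mult y (om_mult ?xi (om_mult (d ?x) (om_mult ?p ?xi)))))"
    by (simp add: D_leibniz0[OF alg gdb] D_inverse[OF alg gdb, OF rs(2) n inv] hX hY y wf wfd
        om_assoc[of n0] om_mult_uminus_right wf_closed)
  also have "\<dots> = om_mult (d (om_mult y ?xi)) (om_mult (om_mult ?x ?p) ?xi)"
    by (simp add: D_leibniz0[OF alg gd] D_inverse[OF alg gd, OF rs(1) n inv] y wf wfd
        om_assoc[of n0] dist wf_closed cancel)
  finally show ?thesis .
qed

lemma conjugated_relation:
  assumes wf: "om_wf n0 x" "om_wf n0 xi" "om_wf n0 r" "om_wf n0 y" "om_wf n0 v" "om_wf n0 q" "om_wf n0 u"
    and rel: "om_diff (om_mult r x) (om_mult x p) = om_uminus (om_mult (om_mult (om_mult v q) u) y)"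
    and inv: "om_mult x xi = I" and unit: "om_mult r I = r"
  shows "om_mult (om_mult x p) xi = om_add r (om_mult v (om_mult q (om_mult u (om_mult y xi))))"
proof -
  have "om_mult x p = om_add (om_mult r x) (om_mult (om_mult (om_mult v q) u) y)"
    using rel by (rule om_diff_eq_uminus)
  then show ?thesis
    using wf by (simp add: om_mult_add_left[of n0] om_assoc[of n0] wf_closed inv unit)
qed

text \<open>If psi solves db psi = (d psi)(R + V Q U psi) with constants U, V, R,
  then phi = U psi V solves db phi = (d phi) Q phi + d theta, theta = U psi R V:
  sandwiching moves the constants U, V through d and db.\<close>
lemma first_order_equation:
  fixes d db :: "'b::ring_1 om \<Rightarrow> 'b om"
  assumes alg: "complex_algebra sc"
    and gd: "graded_differential sc n0 d" and gdb: "graded_differential sc n0 db"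
    and wf: "om_wf n0 psi" "om_wf n0 u" "om_wf n0 v" "om_wf n0 r" "om_wf n0 q"
    and hom: "om_hom 0 psi" "om_hom 0 u" "om_hom 0 v" "om_hom 0 r"
    and const: "d u = om_zero" "db u = om_zero" "d v = om_zero" "db v = om_zero" "d r = om_zero"
    and eq: "db psi = om_mult (d psi) (om_add r (om_mult v (om_mult q (om_mult u psi))))"
  shows "db (om_mult u (om_mult psi v)) =
         om_add (om_mult (om_mult (d (om_mult u (om_mult psi v))) q) (om_mult u (om_mult psi v)))
                (d (om_mult u (om_mult psi (om_mult r v))))"
proof -
  have wfd: "om_wf n0 (d psi)" using D_wf[OF alg gd] wf by blast
  have wrv: "om_wf n0 (om_mult r v)" and drv: "d (om_mult r v) = om_zero"
    using wf D_leibniz0[OF alg gd, OF hom(4) wf(4,3)] const by (simp_all add: wf_mult)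
  have dphi: "d (om_mult u (om_mult psi v)) = om_mult u (om_mult (d psi) v)"
    by (rule D_sandwich[OF alg gd, OF wf(2) hom(2) const(1) wf(1) hom(1) wf(3) const(3)])
  have dtheta: "d (om_mult u (om_mult psi (om_mult r v))) = om_mult u (om_mult (d psi) (om_mult r v))"
    by (rule D_sandwich[OF alg gd, OF wf(2) hom(2) const(1) wf(1) hom(1) wrv drv])
  have "db (om_mult u (om_mult psi v)) = om_mult u (om_mult (db psi) v)"
    by (rule D_sandwich[OF alg gdb, OF wf(2) hom(2) const(2) wf(1) hom(1) wf(3) const(4)])
  also have "\<dots> = om_add (om_mult u (om_mult (d psi) (om_mult r v)))
      (om_mult u (om_mult (d psi) (om_mult v (om_mult q (om_mult u (om_mult psi v))))))"
    using wf wfd by (simp add: eq om_mult_add_left[of n0] om_mult_add_right om_assoc[of n0] wf_mult)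
  also have "\<dots> = om_add (d (om_mult u (om_mult psi (om_mult r v))))
      (om_mult (om_mult (d (om_mult u (om_mult psi v))) q) (om_mult u (om_mult psi v)))"
    unfolding dphi dtheta using wf wfd by (simp add: om_assoc[of n0] wf_mult)
  finally show ?thesis by (simp add: om_add_comm)
qed

text \<open>Applying d to db phi = (d phi) Q phi + d theta and using d db = - db d
  yields the second-order equation db d phi = (d phi) Q (d phi).\<close>
lemma second_order_equation:
  fixes d db :: "'b::ring_1 om \<Rightarrow> 'b om"
  assumes alg: "complex_algebra sc" and bd: "bidifferential sc n0 d db"
    and wf: "om_wf n0 phi" "om_wf n0 theta" "om_wf n0 q"
    and hom: "om_hom 0 phi" "om_hom 0 q" and cq: "d q = om_zero"
    and eq: "db phi = om_add (om_mult (om_mult (d phi) q) phi) (d theta)"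
  shows "db (d phi) = om_mult (om_mult (d phi) q) (d phi)"
proof -
  have gd: "graded_differential sc n0 d" using bd unfolding bidifferential_def by blast
  have wdphi: "om_wf n0 (d phi)" and hdphi: "om_hom 1 (d phi)"
    using D_wf[OF alg gd] D_hom[OF alg gd] wf hom by fastforce+
  have hdq: "om_hom 1 (om_mult (d phi) q)" using hom_mult[OF wdphi hdphi hom(2)] by simp
  have wdq: "om_wf n0 (om_mult (d phi) q)" using wdphi wf by (simp add: wf_closed)
  have ddq: "d (om_mult (d phi) q) = om_zero"
    using D_leibniz1[OF alg gd, OF hdphi wdphi wf(3)] D_D[OF alg gd, OF wf(1)] cq by simp
  have "d (db phi) = om_add (d (om_mult (om_mult (d phi) q) phi)) (d (d theta))"
    unfolding eq using D_add[OF alg gd] wdq wf D_wf[OF alg gd] by (simp add: wf_closed)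
  also have "\<dots> = om_uminus (om_mult (om_mult (d phi) q) (d phi))"
    using D_leibniz1[OF alg gd, OF hdq wdq wf(1)] ddq D_D[OF alg gd, OF wf(2)] by simp
  finally have "om_add (om_uminus (om_mult (om_mult (d phi) q) (d phi))) (db (d phi)) = om_zero"
    using bd wf(1) unfolding bidifferential_def by metis
  then show ?thesis using om_add_eq_zero by fastforce
qed

theorem theorem2p3:
  fixes sc :: "complex \<Rightarrow> 'b::ring_1 \<Rightarrow> 'b"
    and n0 n n' m m' :: nat
    and d db :: "'b om \<Rightarrow> 'b om"
    and X Xi Y P R U V Q :: "'b mat"
  assumes alg: "complex_algebra sc"
    and bd: "bidifferential sc n0 d db"
    and rs_d: "respects_sizes n0 d" and rs_db: "respects_sizes n0 db"
    and sizes: "n0 \<le> n" "n0 \<le> n'" "n0 \<le> m" "n0 \<le> m'"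
    and hX: "db (blk n n X) = om_mult (d (blk n n X)) (blk n n P)"
    and hY: "db (blk n' n Y) = om_mult (d (blk n' n Y)) (blk n n P)"
    and hRX: "om_diff (om_mult (blk n n R) (blk n n X)) (om_mult (blk n n X) (blk n n P))
              = om_uminus (om_mult (om_mult (om_mult (blk n m V) (blk m m' Q)) (blk m' n' U)) (blk n' n Y))"
    and cP: "d (blk n n P) = om_zero" "db (blk n n P) = om_zero"
    and cR: "d (blk n n R) = om_zero" "db (blk n n R) = om_zero"
    and cU: "d (blk m' n' U) = om_zero" "db (blk m' n' U) = om_zero"
    and cV: "d (blk n m V) = om_zero" "db (blk n m V) = om_zero"
    and cQ: "d (blk m m' Q) = om_zero" "db (blk m m' Q) = om_zero"
    and inv: "om_mult (blk n n X) (blk n n Xi) = blk n n idm"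
             "om_mult (blk n n Xi) (blk n n X) = blk n n idm"
  shows "let \<phi> = om_mult (om_mult (om_mult (blk m' n' U) (blk n' n Y)) (blk n n Xi)) (blk n m V);
             \<theta> = om_mult (om_mult (om_mult (om_mult (blk m' n' U) (blk n' n Y)) (blk n n Xi)) (blk n n R)) (blk n m V)
         in db \<phi> = om_add (om_mult (om_mult (d \<phi>) (blk m m' Q)) \<phi>) (d \<theta>)
            \<and> db (d \<phi>) = om_mult (om_mult (d \<phi>) (blk m m' Q)) (d \<phi>)"
proof -
  have gd: "graded_differential sc n0 d" and gdb: "graded_differential sc n0 db"
    using bd unfolding bidifferential_def by blast+
  define x y xi p r u v q where "x = blk n n X" and "y = blk n' n Y" and "xi = blk n n Xi"
    and "p = blk n n P" and "r = blk n n R" and "u = blk m' n' U" and "v = blk n m V" and "q = blk m m' Q"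
  note blocks = x_def y_def xi_def p_def r_def u_def v_def q_def
  have wf: "om_wf n0 x" "om_wf n0 y" "om_wf n0 xi" "om_wf n0 r" "om_wf n0 u" "om_wf n0 v" "om_wf n0 q"
    unfolding blocks using wf_blk sizes by blast+
  have hom: "om_hom 0 y" "om_hom 0 xi" "om_hom 0 r" "om_hom 0 u" "om_hom 0 v" "om_hom 0 q"
    unfolding blocks by (rule hom_blk)+
  have const: "d u = om_zero" "db u = om_zero" "d v = om_zero" "db v = om_zero" "d r = om_zero" "d q = om_zero"
    unfolding blocks using cU cV cR cQ by blast+
  define psi where "psi = om_mult y xi"
  define \<phi> \<theta> where "\<phi> = om_mult u (om_mult psi v)" and "\<theta> = om_mult u (om_mult psi (om_mult r v))"
  have psi: "om_wf n0 psi" "om_hom 0 psi"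
    unfolding psi_def using wf hom by (simp_all add: wf_mult hom0_mult)
  have "db psi = om_mult (d psi) (om_mult (om_mult x p) xi)"
    unfolding psi_def blocks
    by (rule quotient_equation[OF alg gd gdb, OF rs_d rs_db sizes(1) wf_blk[OF sizes(2,1)] hom_blk hX hY inv])
  also have "om_mult (om_mult x p) xi = om_add r (om_mult v (om_mult q (om_mult u psi)))"
    unfolding psi_def
    by (rule conjugated_relation[OF wf(1,3,4,2,6,7,5) hRX[folded blocks] inv(1)[folded blocks]])
      (simp add: r_def om_mult_unit_right[OF wf_blk[OF sizes(1,1)] in_block_blk])
  finally have first: "db \<phi> = om_add (om_mult (om_mult (d \<phi>) q) \<phi>) (d \<theta>)"
    unfolding \<phi>_def \<theta>_def
    by (rule first_order_equation[OF alg gd gdb, OF psi(1) wf(5,6,4,7) psi(2) hom(4,5,3) const(1-5)])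
  have "om_wf n0 \<phi>" "om_hom 0 \<phi>" "om_wf n0 \<theta>"
    unfolding \<phi>_def \<theta>_def using psi wf hom by (simp_all add: wf_mult hom0_mult)
  then have second: "db (d \<phi>) = om_mult (om_mult (d \<phi>) q) (d \<phi>)"
    using second_order_equation[OF alg bd, OF _ _ wf(7) _ hom(6) const(6) first] by blast
  have "om_mult (om_mult (om_mult u y) xi) v = \<phi>"
    and "om_mult (om_mult (om_mult (om_mult u y) xi) r) v = \<theta>"
    unfolding \<phi>_def \<theta>_def psi_def using wf by (simp_all add: om_assoc[of n0] wf_mult)
  then show ?thesis
    unfolding Let_def blocks[symmetric] using first second by simp
qed

end
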